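(* Let $d \geq 1$ be an integer and let $v = (v_1,\dots,v_d) \in \mathbb{C}^d$. Then there exists a nonempty subset $S \subseteq [d] = \{1,\dots,d\}$ such that \[ \frac{1}{\sqrt{|S|}} \left| \sum_{j \in S} v_j \right| \geq \frac{\|v\|_2}{8\sqrt{\log_2(d) + 3}}, \] where $\|v\|_2 = \left(\sum_{j=1}^d |v_j|^2\right)^{1/2}$. *)

theory Defs
  imports "HOL-Analysis.Analysis"
begin

end

theory Submission
  imports Defs
begin

text \<open>
  Let M be the largest normalised sum |sum_{j\<in>S} v_j| / sqrt |S| over nonempty S. Splitting
  each v_j into the positive parts of Re v_j, -Re v_j, Im v_j and -Im v_j reduces this to
  nonnegative real weights a_j with all subset sums bounded by M sqrt |S|. Removing the smallest
  weight a_min, the bound for the whole index set gives n a_min \<le> M sqrt n, i.e.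
  a_min^2 \<le> M^2/n; by induction the sum of squares is at most M^2 (1 + 1/2 + ... + 1/n)
  \<le> M^2 (1 + ln n). Hence ||v||^2 \<le> 4 M^2 (1 + ln d), which is more than enough for the
  stated constant.
\<close>

lemma square_Min_le_of_sum_le:
  fixes a :: "'a \<Rightarrow> real"
  assumes "finite I" "I \<noteq> {}" "\<forall>j\<in>I. a j \<ge> 0" "sum a I \<le> M * sqrt (real (card I))"
  shows "(Min (a ` I))\<^sup>2 \<le> M\<^sup>2 / real (card I)"
proof -
  define n where "n = real (card I)"
  define m where "m = Min (a ` I)"
  have n_pos: "n > 0" using assms(1,2) by (simp add: n_def card_gt_0_iff)
  have m_nonneg: "m \<ge> 0" using assms by (simp add: m_def)
  have "n * m = (\<Sum>j\<in>I. m)" by (simp add: n_def)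
  also have "\<dots> \<le> sum a I" using assms(1) by (intro sum_mono) (simp add: m_def)
  also have "\<dots> \<le> M * sqrt n" using assms(4) by (simp add: n_def)
  finally have "(n * m)\<^sup>2 \<le> (M * sqrt n)\<^sup>2"
    using n_pos m_nonneg by (intro power_mono) auto
  then have "n * (n * m\<^sup>2) \<le> n * M\<^sup>2"
    using n_pos by (simp add: power_mult_distrib power2_eq_square algebra_simps)
  then show ?thesis using n_pos by (simp add: m_def n_def field_simps)
qed

lemma sum_power2_le_of_subset_sums_le:
  fixes a :: "'a \<Rightarrow> real"
  assumes "finite I" "\<forall>j\<in>I. a j \<ge> 0"
    and "\<forall>S. S \<subseteq> I \<longrightarrow> S \<noteq> {} \<longrightarrow> sum a S \<le> M * sqrt (real (card S))"
  shows "(\<Sum>j\<in>I. (a j)\<^sup>2) \<le> M\<^sup>2 * (1 + ln (real (card I)))"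
  using assms
proof (induction "card I" arbitrary: I rule: less_induct)
  case less
  show ?case
  proof (cases "I = {}")
    case True
    then show ?thesis by simp
  next
    case nonempty: False
    define n where "n = card I"
    have n_pos: "n > 0" using less.prems(1) nonempty by (simp add: n_def card_gt_0_iff)
    have "Min (a ` I) \<in> a ` I" using less.prems(1) nonempty by simp
    then obtain j0 where j0: "j0 \<in> I" "a j0 = Min (a ` I)" by auto
    have card_rest: "card (I - {j0}) = n - 1" using j0(1) less.prems(1) by (simp add: n_def)
    have "(a j0)\<^sup>2 \<le> M\<^sup>2 / real n"
      using j0(2) square_Min_le_of_sum_le[OF less.prems(1) nonempty less.prems(2)] less.prems(3) nonempty
      by (simp add: n_def)
    moreover have "(\<Sum>j\<in>I - {j0}. (a j)\<^sup>2) \<le> M\<^sup>2 * (1 + ln (real n)) - M\<^sup>2 / real n"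
    proof (cases "n = 1")
      case True
      then have "I - {j0} = {}" using card_rest less.prems(1) by simp
      then have "(\<Sum>j\<in>I - {j0}. (a j)\<^sup>2) = 0" by (simp only: sum.empty)
      then show ?thesis using True by simp
    next
      case False
      then have n2: "n \<ge> 2" using n_pos by simp
      have "(\<Sum>j\<in>I - {j0}. (a j)\<^sup>2) \<le> M\<^sup>2 * (1 + ln (real (card (I - {j0}))))"
        by (rule less.hyps) (use less.prems j0(1) n2 card_rest in \<open>auto simp: n_def\<close>)
      moreover have "ln (real (n - 1)) + 1 / real n \<le> ln (real n)"
        using ln_diff_le[of "real (n - 1)" "real n"] n2 by (simp add: of_nat_diff diff_divide_distrib)
      then have "M\<^sup>2 * (ln (real (n - 1)) + 1 / real n) \<le> M\<^sup>2 * ln (real n)"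
        by (rule mult_left_mono) simp
      ultimately show ?thesis using card_rest by (simp add: algebra_simps)
    qed
    moreover have "(\<Sum>j\<in>I. (a j)\<^sup>2) = (a j0)\<^sup>2 + (\<Sum>j\<in>I - {j0}. (a j)\<^sup>2)"
      using less.prems(1) j0(1) by (simp add: sum.remove)
    ultimately show ?thesis by (simp add: n_def)
  qed
qed

lemma sum_pos_part_Re_le_of_subset_sums_le:
  fixes v :: "'a \<Rightarrow> complex"
  assumes "finite I" "cmod c = 1" "M \<ge> 0"
    and "\<forall>S. S \<subseteq> I \<longrightarrow> S \<noteq> {} \<longrightarrow> cmod (\<Sum>j\<in>S. v j) \<le> M * sqrt (real (card S))"
  shows "(\<Sum>j\<in>I. (max 0 (Re (c * v j)))\<^sup>2) \<le> M\<^sup>2 * (1 + ln (real (card I)))"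
proof (rule sum_power2_le_of_subset_sums_le[OF assms(1)], simp, intro allI impI)
  fix S assume S: "S \<subseteq> I" "S \<noteq> {}"
  define T where "T = {j\<in>S. Re (c * v j) > 0}"
  have fin_S: "finite S" using S(1) assms(1) finite_subset by blast
  have "\<And>x::real. max 0 x = (if x > 0 then x else 0)" by auto
  then have "(\<Sum>j\<in>S. max 0 (Re (c * v j))) = (\<Sum>j\<in>T. Re (c * v j))"
    unfolding T_def using fin_S by (simp add: sum.inter_filter)
  also have "\<dots> \<le> M * sqrt (real (card S))"
  proof (cases "T = {}")
    case True
    then show ?thesis using assms(3) by simp
  next
    case False
    have "(\<Sum>j\<in>T. Re (c * v j)) = Re (c * (\<Sum>j\<in>T. v j))"
      by (simp add: sum_distrib_left)
    also have "\<dots> \<le> cmod (\<Sum>j\<in>T. v j)"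
      using complex_Re_le_cmod[of "c * (\<Sum>j\<in>T. v j)"] assms(2) by (simp add: norm_mult)
    also have "\<dots> \<le> M * sqrt (real (card T))"
      using assms(4) S(1) False by (simp add: T_def subset_iff)
    also have "\<dots> \<le> M * sqrt (real (card S))"
      using assms(3) fin_S by (intro mult_left_mono) (auto simp: T_def card_mono)
    finally show ?thesis .
  qed
  finally show "(\<Sum>j\<in>S. max 0 (Re (c * v j))) \<le> M * sqrt (real (card S))" .
qed

lemma cmod_power2_eq_sum_pos_parts:
  "(cmod z)\<^sup>2 = (max 0 (Re z))\<^sup>2 + (max 0 (Re (- z)))\<^sup>2
     + (max 0 (Re (- \<i> * z)))\<^sup>2 + (max 0 (Re (\<i> * z)))\<^sup>2"
  by (simp add: cmod_power2 max_def)

lemma sum_cmod_power2_le_of_subset_sums_le: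
  fixes v :: "'a \<Rightarrow> complex"
  assumes "finite I" "M \<ge> 0"
    and "\<forall>S. S \<subseteq> I \<longrightarrow> S \<noteq> {} \<longrightarrow> cmod (\<Sum>j\<in>S. v j) \<le> M * sqrt (real (card S))"
  shows "(\<Sum>j\<in>I. (cmod (v j))\<^sup>2) \<le> 4 * M\<^sup>2 * (1 + ln (real (card I)))"
proof -
  note direction = sum_pos_part_Re_le_of_subset_sums_le[OF assms(1) _ assms(2,3)]
  have "(\<Sum>j\<in>I. (cmod (v j))\<^sup>2) =
      (\<Sum>j\<in>I. (max 0 (Re (1 * v j)))\<^sup>2) + (\<Sum>j\<in>I. (max 0 (Re (-1 * v j)))\<^sup>2)
      + (\<Sum>j\<in>I. (max 0 (Re (- \<i> * v j)))\<^sup>2) + (\<Sum>j\<in>I. (max 0 (Re (\<i> * v j)))\<^sup>2)"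
    by (simp add: cmod_power2_eq_sum_pos_parts[of "v _"] sum.distrib)
  also have "\<dots> \<le> 4 * M\<^sup>2 * (1 + ln (real (card I)))"
    using direction[of 1] direction[of "-1"] direction[of "- \<i>"] direction[of \<i>] by simp
  finally show ?thesis .
qed

lemma ln_le_log2: "x \<ge> 1 \<Longrightarrow> ln x \<le> log 2 x"
  using ln_le_minus_one[of 2] by (simp add: log_def le_divide_eq mult_left_le)

lemma exists_subset_sum_power2_ge:
  fixes v :: "'a \<Rightarrow> complex"
  assumes "finite I" "I \<noteq> {}"
  shows "\<exists>S. S \<subseteq> I \<and> S \<noteq> {} \<and>
    (\<Sum>j\<in>I. (cmod (v j))\<^sup>2) \<le> 4 * (cmod (\<Sum>j\<in>S. v j) / sqrt (real (card S)))\<^sup>2 * (1 + ln (real (card I)))"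
proof -
  define f where "f S = cmod (\<Sum>j\<in>S. v j) / sqrt (real (card S))" for S
  define \<S> where "\<S> = {S. S \<subseteq> I \<and> S \<noteq> {}}"
  have "finite \<S>" "\<S> \<noteq> {}" using assms by (auto simp: \<S>_def)
  then have "Max (f ` \<S>) \<in> f ` \<S>" by simp
  then obtain S where S: "S \<in> \<S>" "f S = Max (f ` \<S>)" by auto
  have "cmod (\<Sum>j\<in>T. v j) \<le> f S * sqrt (real (card T))" if "T \<in> \<S>" for T
  proof -
    have "f T \<le> f S" using that \<open>finite \<S>\<close> by (simp add: S(2))
    moreover have "card T > 0" using that assms(1) finite_subset[of T I] by (auto simp: \<S>_def card_gt_0_iff)
    ultimately show ?thesis by (simp add: f_def field_simps)
  qed
  then have "(\<Sum>j\<in>I. (cmod (v j))\<^sup>2) \<le> 4 * (f S)\<^sup>2 * (1 + ln (real (card I)))"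
    using sum_cmod_power2_le_of_subset_sums_le[OF assms(1)] by (simp add: \<S>_def f_def)
  then show ?thesis using S(1) by (auto simp: \<S>_def f_def)
qed

theorem mainTheorem1:
  fixes d :: nat and v :: "nat \<Rightarrow> complex"
  assumes "d \<ge> 1"
  shows "\<exists>S. S \<subseteq> {1..d} \<and> S \<noteq> {} \<and>
    (1 / sqrt (real (card S))) * cmod (\<Sum>j\<in>S. v j)
      \<ge> sqrt (\<Sum>j=1..d. (cmod (v j))\<^sup>2) / (8 * sqrt (log 2 (real d) + 3))"
proof -
  obtain S where S: "S \<subseteq> {1..d}" "S \<noteq> {}"
    and bound: "(\<Sum>j=1..d. (cmod (v j))\<^sup>2) \<le> 4 * (cmod (\<Sum>j\<in>S. v j) / sqrt (real (card S)))\<^sup>2 * (1 + ln (real d))"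
    using exists_subset_sum_power2_ge[of "{1..d}" v] assms by auto
  define m where "m = (1 / sqrt (real (card S))) * cmod (\<Sum>j\<in>S. v j)"
  define L where "L = log 2 (real d) + 3"
  have ln_d: "0 \<le> ln (real d)" "ln (real d) \<le> log 2 (real d)" using assms ln_le_log2 by simp_all
  then have "L > 0" by (simp add: L_def)
  have "m \<ge> 0" by (simp add: m_def)
  have "(\<Sum>j=1..d. (cmod (v j))\<^sup>2) \<le> m\<^sup>2 * (4 * (1 + ln (real d)))"
    using bound by (simp add: m_def algebra_simps)
  also have "\<dots> \<le> m\<^sup>2 * (8 * sqrt L)\<^sup>2"
    using ln_d by (intro mult_left_mono) (simp_all add: L_def power_mult_distrib)
  also have "\<dots> = (m * (8 * sqrt L))\<^sup>2" by (simp only: power_mult_distrib)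
  finally have "sqrt (\<Sum>j=1..d. (cmod (v j))\<^sup>2) \<le> m * (8 * sqrt L)"
    using \<open>m \<ge> 0\<close> \<open>L > 0\<close> by (intro real_le_lsqrt) simp_all
  then show ?thesis
    using S \<open>L > 0\<close> by (auto simp: m_def L_def divide_le_eq mult.commute)
qed

end
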